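(* Let $\mathsf{Syn}(\delta)$ be the free PROP on a single generator $\delta:1\to2$ (graph model in the context) and $\mathbf{FinCorel}$ the PROP of finite corelations. The assignment sending a morphism $f:m\to n$ of $\mathsf{Syn}(\delta)$ to its ancestry partition $\widetilde{\pi}(f)$ extends to a strict symmetric monoidal functor $\Pi:\mathsf{Syn}(\delta)\to\mathbf{FinCorel}$ which is the identity on objects.
   Context: A PROP is a strict symmetric monoidal category whose monoid of objects is $(\mathbb{N},+,0)$. Write $\underline{m}=\{1,\dots,m\}$. $\mathsf{Syn}(\delta)$: objects are natural numbers; a morphism $f:m\to n$ is an isomorphism class of finite directed acyclic graphs $G(f)$ with $m$ linearly ordered input half-edges, $n$ linearly ordered output half-edges, and a finite set of internal vertices, each with exactly one incoming half-edge and a linearly ordered pair of outgoing half-edges; isomorphisms preserve the boundary orders and vertex incidence. Composition glues outputs to inputs in order; tensor ($+$) is disjoint union with concatenated boundary orders; symmetries are wire crossings (not vertices, and they connect nothing beyond the wires they permute). $\mathbf{FinCorel}$: objects $\mathbb{N}$; morphisms $m\to n$ are equivalence relations on $\underline{m}\sqcup\underline{n}$; composite of $R:m\to n$, $S:n\to p$ is the restriction to $\underline{m}\sqcup\underline{p}$ of the equivalence relation generated by $R\cup S$ on $\underline{m}\sqcup\underline{n}\sqcup\underline{p}$; tensor is disjoint union with reindexing; symmetries are transposition corelations. Ancestry partition: for $f:m\to n$, let $|G(f)|$ be the underlying undirected graph of $G(f)$ with inputs attached as pendant vertices labelled by $\underline{m}$ and outputs as pendant vertices labelled by $\underline{n}$;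 $\widetilde\pi(f)$ is the equivalence relation on $\underline{m}\sqcup\underline{n}$ with $x\sim y$ iff pendants $x$ and $y$ lie in the same connected component of $|G(f)|$. *)

theory Defs
  imports Main
begin

text \<open>Boundary positions are 0-indexed: input i < m is Inl i, output j < n is Inr j.\<close>

definition bdry :: "nat \<Rightarrow> nat \<Rightarrow> (nat + nat) set" where
  "bdry m n = Inl ` {..<m} \<union> Inr ` {..<n}"

text \<open>A source of a wire: an input half-edge, or one of the two (ordered) outgoing
  half-edges of an internal vertex (False = first, True = second).
  A target of a wire: an output half-edge, or the unique incoming half-edge of a vertex.\<close>

datatype 'v src = SIn nat | SOut 'v bool
datatype 'v tgt = TOut nat | TIn 'v

text \<open>A diagram: finite vertex set together with the wiring, sending each source to the
  target it is glued to.\<close>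

type_synonym 'v diag = "'v set \<times> ('v src \<Rightarrow> 'v tgt)"

definition sources :: "nat \<Rightarrow> 'v set \<Rightarrow> 'v src set" where
  "sources m V = SIn ` {..<m} \<union> {SOut v b | v b. v \<in> V}"

definition targets :: "nat \<Rightarrow> 'v set \<Rightarrow> 'v tgt set" where
  "targets n V = TOut ` {..<n} \<union> TIn ` V"

definition succ_rel :: "'v diag \<Rightarrow> ('v \<times> 'v) set" where
  "succ_rel G = {(v, u). v \<in> fst G \<and> u \<in> fst G \<and> (\<exists>b. snd G (SOut v b) = TIn u)}"

definition is_diag :: "nat \<Rightarrow> nat \<Rightarrow> 'v diag \<Rightarrow> bool" where
  "is_diag m n G \<longleftrightarrow> finite (fst G)
     \<and> bij_betw (snd G) (sources m (fst G)) (targets n (fst G))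
     \<and> acyclic (succ_rel G)"

text \<open>Isomorphism of diagrams: a bijection of vertices preserving the wiring
  (boundary orders are preserved since boundary labels are fixed).\<close>

definition diag_iso :: "nat \<Rightarrow> 'v diag \<Rightarrow> 'w diag \<Rightarrow> bool" where
  "diag_iso m G H \<longleftrightarrow> (\<exists>\<phi>. bij_betw \<phi> (fst G) (fst H) \<and>
     (\<forall>s \<in> sources m (fst G). snd H (map_src \<phi> s) = map_tgt \<phi> (snd G s)))"

definition id_diag :: "nat \<Rightarrow> 'v diag" where
  "id_diag m = ({}, \<lambda>s. case s of SIn i \<Rightarrow> TOut i | SOut v b \<Rightarrow> TOut 0)"

definition sym_perm :: "nat \<Rightarrow> nat \<Rightarrow> nat \<Rightarrow> nat" where
  "sym_perm m n i = (if i < m then n + i else i - m)"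

definition sym_diag :: "nat \<Rightarrow> nat \<Rightarrow> 'v diag" where
  "sym_diag m n = ({}, \<lambda>s. case s of SIn i \<Rightarrow> TOut (sym_perm m n i) | SOut v b \<Rightarrow> TOut 0)"

definition liftH :: "'w tgt \<Rightarrow> ('v + 'w) tgt" where
  "liftH t = (case t of TIn u \<Rightarrow> TIn (Inr u) | TOut k \<Rightarrow> TOut k)"

definition throughG :: "('w src \<Rightarrow> 'w tgt) \<Rightarrow> 'v tgt \<Rightarrow> ('v + 'w) tgt" where
  "throughG wH t = (case t of TIn v \<Rightarrow> TIn (Inl v) | TOut j \<Rightarrow> liftH (wH (SIn j)))"

text \<open>Composition H o G of G : m -> n and H : n -> p (outputs of G glued to inputs of H).\<close>

definition comp_diag :: "'v diag \<Rightarrow> 'w diag \<Rightarrow> ('v + 'w) diag" where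
  "comp_diag G H = (Inl ` fst G \<union> Inr ` fst H,
     \<lambda>s. case s of
        SIn i \<Rightarrow> throughG (snd H) (snd G (SIn i))
      | SOut (Inl v) b \<Rightarrow> throughG (snd H) (snd G (SOut v b))
      | SOut (Inr u) b \<Rightarrow> liftH (snd H (SOut u b)))"

definition liftL :: "'v tgt \<Rightarrow> ('v + 'w) tgt" where
  "liftL t = (case t of TIn v \<Rightarrow> TIn (Inl v) | TOut j \<Rightarrow> TOut j)"

definition liftR :: "nat \<Rightarrow> 'w tgt \<Rightarrow> ('v + 'w) tgt" where
  "liftR n t = (case t of TIn u \<Rightarrow> TIn (Inr u) | TOut j \<Rightarrow> TOut (n + j))"

definition tensor_diag :: "nat \<Rightarrow> nat \<Rightarrow> 'v diag \<Rightarrow> 'w diag \<Rightarrow> ('v + 'w) diag" where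
  "tensor_diag m n G H = (Inl ` fst G \<union> Inr ` fst H,
     \<lambda>s. case s of
        SIn i \<Rightarrow> (if i < m then liftL (snd G (SIn i)) else liftR n (snd H (SIn (i - m))))
      | SOut (Inl v) b \<Rightarrow> liftL (snd G (SOut v b))
      | SOut (Inr u) b \<Rightarrow> liftR n (snd H (SOut u b)))"

text \<open>Nodes of the underlying undirected graph |G|: pendant boundary vertices (Inl) and
  internal vertices (Inr).\<close>

definition src_node :: "'v src \<Rightarrow> (nat + nat) + 'v" where
  "src_node s = (case s of SIn i \<Rightarrow> Inl (Inl i) | SOut v b \<Rightarrow> Inr v)"

definition tgt_node :: "'v tgt \<Rightarrow> (nat + nat) + 'v" where
  "tgt_node t = (case t of TOut j \<Rightarrow> Inl (Inr j) | TIn v \<Rightarrow> Inr v)"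

definition und_edges :: "nat \<Rightarrow> 'v diag \<Rightarrow> (((nat + nat) + 'v) \<times> ((nat + nat) + 'v)) set" where
  "und_edges m G = {(src_node s, tgt_node (snd G s)) | s. s \<in> sources m (fst G)}"

definition ancestry :: "nat \<Rightarrow> nat \<Rightarrow> 'v diag \<Rightarrow> ((nat + nat) \<times> (nat + nat)) set" where
  "ancestry m n G = {(x, y). x \<in> bdry m n \<and> y \<in> bdry m n \<and>
     (Inl x, Inl y) \<in> (und_edges m G \<union> (und_edges m G)\<inverse>)\<^sup>*}"

definition is_corel :: "nat \<Rightarrow> nat \<Rightarrow> ((nat + nat) \<times> (nat + nat)) set \<Rightarrow> bool" where
  "is_corel m n R \<longleftrightarrow> equiv (bdry m n) R"

definition emb1 :: "nat + nat \<Rightarrow> nat + nat + nat" where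
  "emb1 x = (case x of Inl i \<Rightarrow> Inl i | Inr j \<Rightarrow> Inr (Inl j))"

definition emb2 :: "nat + nat \<Rightarrow> nat + nat + nat" where
  "emb2 x = (case x of Inl j \<Rightarrow> Inr (Inl j) | Inr k \<Rightarrow> Inr (Inr k))"

definition emb13 :: "nat + nat \<Rightarrow> nat + nat + nat" where
  "emb13 x = (case x of Inl i \<Rightarrow> Inl i | Inr k \<Rightarrow> Inr (Inr k))"

definition corel_comp :: "nat \<Rightarrow> nat \<Rightarrow> ((nat + nat) \<times> (nat + nat)) set
    \<Rightarrow> ((nat + nat) \<times> (nat + nat)) set \<Rightarrow> ((nat + nat) \<times> (nat + nat)) set" where
  "corel_comp m p R S =
    (let E = map_prod emb1 emb1 ` R \<union> map_prod emb2 emb2 ` S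
     in {(x, y). x \<in> bdry m p \<and> y \<in> bdry m p \<and> (emb13 x, emb13 y) \<in> (E \<union> E\<inverse>)\<^sup>*})"

definition corel_of_perm :: "nat \<Rightarrow> (nat \<Rightarrow> nat) \<Rightarrow> ((nat + nat) \<times> (nat + nat)) set" where
  "corel_of_perm m f = (let P = {(Inl i, Inr (f i)) | i. i < m} in P \<union> P\<inverse> \<union> Id_on (bdry m m))"

definition corel_id :: "nat \<Rightarrow> ((nat + nat) \<times> (nat + nat)) set" where
  "corel_id m = corel_of_perm m id"

definition corel_sym :: "nat \<Rightarrow> nat \<Rightarrow> ((nat + nat) \<times> (nat + nat)) set" where
  "corel_sym m n = corel_of_perm (m + n) (sym_perm m n)"

definition corel_tensor :: "nat \<Rightarrow> nat \<Rightarrow> ((nat + nat) \<times> (nat + nat)) set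
    \<Rightarrow> ((nat + nat) \<times> (nat + nat)) set \<Rightarrow> ((nat + nat) \<times> (nat + nat)) set" where
  "corel_tensor m n R S =
     R \<union> map_prod (map_sum ((+) m) ((+) n)) (map_sum ((+) m) ((+) n)) ` S"

end

theory Submission
  imports Defs
begin

text \<open>Connectivity of boundary pendants in the undirected graph |G| is all that Pi sees, and an
  isomorphism of diagrams induces a graph isomorphism fixing the pendants.
  Identities and symmetries have no vertices, so |G| is a perfect matching of pendants. A tensor
  product is a disjoint union, so connectivity splits into the two factors. For a composite, the
  graph |H \<circ> G| with each wire through the middle boundary subdivided is the union of |G| and |H|
  glued along the n middle pendants; a path between pendants of such a union decomposes into
  segments that stay inside one of the two graphs and end at shared pendants, and the relation
  generated by these segments is the equivalence relation generated by Pi(G) and Pi(H) on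
  m + n + p, whose restriction to m + p is the corelation composite.\<close>

section \<open>Connectivity in undirected graphs\<close>

abbreviation sym_rtrancl :: "('a \<times> 'a) set \<Rightarrow> ('a \<times> 'a) set" where
  "sym_rtrancl E \<equiv> (E \<union> E\<inverse>)\<^sup>*"

lemma sym_rtrancl_sym: "(a, b) \<in> sym_rtrancl E \<Longrightarrow> (b, a) \<in> sym_rtrancl E"
  by (metis converse_Un converse_converse rtrancl_converseD sup_commute)

lemma sym_rtrancl_mono: "E \<subseteq> E' \<Longrightarrow> (a, b) \<in> sym_rtrancl E \<Longrightarrow> (a, b) \<in> sym_rtrancl E'"
  by (meson Un_mono converse_mono rtrancl_mono subsetD)

lemma sym_rtrancl_map:
  assumes "\<And>a b. (a, b) \<in> E \<Longrightarrow> (g a, g b) \<in> sym_rtrancl E'"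
    and "(x, y) \<in> sym_rtrancl E"
  shows "(g x, g y) \<in> sym_rtrancl E'"
  using assms(2)
proof (induction rule: rtrancl_induct)
  case (step y z)
  from step.hyps(2) have "(g y, g z) \<in> sym_rtrancl E'"
  proof
    assume "(y, z) \<in> E\<inverse>"
    then show ?thesis using assms(1)[of z y] by (simp add: sym_rtrancl_sym)
  qed (rule assms(1))
  with step.IH show ?case by (rule rtrancl_trans)
qed simp

lemma sym_rtrancl_closed:
  assumes "E \<subseteq> A \<times> A" "(a, b) \<in> sym_rtrancl E" "a \<in> A"
  shows "b \<in> A"
  using assms(2,3)
proof (induction rule: rtrancl_induct)
  case (step y z)
  then show ?case using assms(1) by blast
qed simp

lemma sym_rtrancl_outside:
  assumes "E \<subseteq> A \<times> A" "(a, b) \<in> sym_rtrancl E" "a \<notin> A"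
  shows "b = a"
  using assms(2,3)
proof (induction rule: rtrancl_induct)
  case (step y z)
  then show ?case using assms(1) by blast
qed simp

lemma sym_rtrancl_image_cases:
  assumes "(x, y) \<in> sym_rtrancl (map_prod f f ` E)"
  obtains "y = x" | a b where "x = f a" "y = f b"
proof -
  have sub: "map_prod f f ` E \<subseteq> range f \<times> range f" by auto
  show thesis
  proof (cases "x \<in> range f")
    case True
    then show thesis using sym_rtrancl_closed[OF sub assms True] that by blast
  next
    case False
    then show thesis using sym_rtrancl_outside[OF sub assms False] that by blast
  qed
qed

lemma sym_rtrancl_image_iff:
  assumes "inj f"
  shows "(f a, f b) \<in> sym_rtrancl (map_prod f f ` E) \<longleftrightarrow> (a, b) \<in> sym_rtrancl E"
proof
  assume "(f a, f b) \<in> sym_rtrancl (map_prod f f ` E)"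
  then have "(inv f (f a), inv f (f b)) \<in> sym_rtrancl E"
    by (rule sym_rtrancl_map[rotated]) (auto simp: assms)
  then show "(a, b) \<in> sym_rtrancl E" using assms by simp
next
  assume "(a, b) \<in> sym_rtrancl E"
  then show "(f a, f b) \<in> sym_rtrancl (map_prod f f ` E)"
    by (rule sym_rtrancl_map[rotated]) blast
qed

lemma sym_rtrancl_image_Inl:
  assumes "inj f" and f_Inl: "\<And>x. f (Inl x) = Inl (e x)" and f_Inr: "\<And>v. f (Inr v) \<notin> range Inl"
    and path: "(Inl a, Inl b) \<in> sym_rtrancl (map_prod f f ` E)"
  shows "b = a \<or> (\<exists>x y. a = e x \<and> b = e y \<and> (Inl x, Inl y) \<in> sym_rtrancl E)"
  using path
proof (cases rule: sym_rtrancl_image_cases)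
  case (2 c d)
  have "z \<in> range Inl" if "Inl w = f z" for w z
    using that f_Inr by (cases z) (auto, metis rangeI)
  then obtain x y where "c = Inl x" "d = Inl y" using 2(1,2) by blast
  moreover have "(f c, f d) \<in> sym_rtrancl (map_prod f f ` E)" using path 2 by simp
  ultimately have "(Inl x, Inl y) \<in> sym_rtrancl E" by (simp add: sym_rtrancl_image_iff[OF assms(1)])
  moreover have "a = e x" "b = e y" using 2 f_Inl \<open>c = Inl x\<close> \<open>d = Inl y\<close> by simp_all
  ultimately show ?thesis by blast
qed simp

lemma sym_rtrancl_reflcl:
  assumes "trans ((E \<union> E\<inverse>)\<^sup>=)"
  shows "sym_rtrancl E = (E \<union> E\<inverse>)\<^sup>="
proof -
  have "sym_rtrancl E = ((E \<union> E\<inverse>)\<^sup>=)\<^sup>*" by simp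
  also have "\<dots> = (((E \<union> E\<inverse>)\<^sup>=)\<^sup>+)\<^sup>=" by (rule rtrancl_trancl_reflcl)
  also have "\<dots> = (E \<union> E\<inverse>)\<^sup>=" by (subst trancl_id[OF assms]) auto
  finally show ?thesis .
qed

lemma sym_rtrancl_Un_disjoint:
  assumes E1: "E1 \<subseteq> A \<times> A" and E2: "E2 \<subseteq> B \<times> B" and disj: "A \<inter> B = {}"
  shows "sym_rtrancl (E1 \<union> E2) = sym_rtrancl E1 \<union> sym_rtrancl E2"
proof -
  have stuck: "y = a" if "(a, y) \<in> sym_rtrancl E" "E \<subseteq> C \<times> C" "y \<notin> C" for a y E C
    using sym_rtrancl_outside[OF that(2) sym_rtrancl_sym[OF that(1)] that(3)] by simp
  have "(a, b) \<in> sym_rtrancl E1 \<union> sym_rtrancl E2" if "(a, b) \<in> sym_rtrancl (E1 \<union> E2)" for a b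
    using that
  proof (induction rule: rtrancl_induct)
    case (step y z)
    from step.hyps(2) consider "(y, z) \<in> E1 \<union> E1\<inverse>" | "(y, z) \<in> E2 \<union> E2\<inverse>" by blast
    then show ?case
    proof cases
      case 1
      then have "y \<notin> B" using E1 disj by blast
      then have "(a, y) \<in> sym_rtrancl E1"
        using step.IH stuck[OF _ E2] by (metis UnE rtrancl.rtrancl_refl)
      then show ?thesis using 1 by (simp add: rtrancl.rtrancl_into_rtrancl)
    next
      case 2
      then have "y \<notin> A" using E2 disj by blast
      then have "(a, y) \<in> sym_rtrancl E2"
        using step.IH stuck[OF _ E1] by (metis UnE rtrancl.rtrancl_refl)
      then show ?thesis using 2 by (simp add: rtrancl.rtrancl_into_rtrancl)
    qed
  qed simp
  then show ?thesis
    using sym_rtrancl_mono[of E1 "E1 \<union> E2"] sym_rtrancl_mono[of E2 "E1 \<union> E2"] by auto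
qed

lemma sym_rtrancl_Un_interface:
  assumes E1: "E1 \<subseteq> A \<times> A" and E2: "E2 \<subseteq> B \<times> B"
    and path: "(a, b) \<in> sym_rtrancl (E1 \<union> E2)" and a: "a \<in> A \<inter> B" and b: "b \<in> A \<inter> B"
  shows "(a, b) \<in> (Restr (sym_rtrancl E1 \<union> sym_rtrancl E2) (A \<inter> B))\<^sup>*"
proof -
  define Q where "Q = Restr (sym_rtrancl E1 \<union> sym_rtrancl E2) (A \<inter> B)"
  define P where "P = {(E1, A), (E2, B)}"
  have P_nodes: "F \<subseteq> C \<times> C" if "(F, C) \<in> P" for F C
    using that E1 E2 unfolding P_def by blast
  \<comment> \<open>Invariant: the last shared vertex k on the path is Q-reachable from a, and the current
    vertex is reached from k inside a single one of the two graphs.\<close>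
  have "\<exists>k F C. k \<in> A \<inter> B \<and> (a, k) \<in> Q\<^sup>* \<and> (F, C) \<in> P \<and> (k, b) \<in> sym_rtrancl F \<and> b \<in> C"
    using path
  proof (induction rule: rtrancl_induct)
    case base
    have "(a, a) \<in> Q\<^sup>*" "(a, a) \<in> sym_rtrancl E1" "(E1, A) \<in> P" by (simp_all add: P_def)
    with a show ?case by blast
  next
    case (step y z)
    then obtain k F C where k: "k \<in> A \<inter> B" "(a, k) \<in> Q\<^sup>*"
      and FC: "(F, C) \<in> P" "(k, y) \<in> sym_rtrancl F" "y \<in> C"
      by blast
    from step.hyps(2) obtain F' C' where F'C': "(F', C') \<in> P" "(y, z) \<in> F' \<union> F'\<inverse>"
      unfolding P_def by blast
    then have "y \<in> C'" "z \<in> C'" using P_nodes by blast+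
    show ?case
    proof (cases "F = F'")
      case True
      then have "(k, z) \<in> sym_rtrancl F'" using FC(2) F'C'(2) by (simp add: rtrancl.rtrancl_into_rtrancl)
      then show ?thesis using k F'C'(1) \<open>z \<in> C'\<close> by blast
    next
      case False
      then have "y \<in> A \<inter> B" "F = E1 \<or> F = E2"
        using FC(1,3) F'C'(1) \<open>y \<in> C'\<close> unfolding P_def by auto
      then have "(k, y) \<in> Q" using k(1) FC(2) unfolding Q_def by blast
      with k(2) have "(a, y) \<in> Q\<^sup>*" by (rule rtrancl.rtrancl_into_rtrancl)
      moreover have "(y, z) \<in> sym_rtrancl F'" using F'C'(2) by (rule r_into_rtrancl)
      ultimately show ?thesis using \<open>y \<in> A \<inter> B\<close> F'C'(1) \<open>z \<in> C'\<close> by blast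
    qed
  qed
  then obtain k F C where "k \<in> A \<inter> B" "(a, k) \<in> Q\<^sup>*" "(F, C) \<in> P" "(k, b) \<in> sym_rtrancl F"
    by blast
  then have "(k, b) \<in> Q" using b unfolding P_def Q_def by blast
  with \<open>(a, k) \<in> Q\<^sup>*\<close> show ?thesis unfolding Q_def by (rule rtrancl.rtrancl_into_rtrancl)
qed

section \<open>Ancestry partitions\<close>

lemma ancestry_is_corel: "is_corel m n (ancestry m n G)"
  unfolding is_corel_def ancestry_def
  by (intro equivI refl_onI symI transI) (auto intro: sym_rtrancl_sym rtrancl_trans)

lemma und_edges_eq_image:
  "und_edges m G = (\<lambda>s. (src_node s, tgt_node (snd G s))) ` sources m (fst G)"
  unfolding und_edges_def by blast

lemma und_edgesI: "s \<in> sources m (fst G) \<Longrightarrow> (src_node s, tgt_node (snd G s)) \<in> und_edges m G"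
  unfolding und_edges_def by blast

lemma diag_wiring_in_targets:
  assumes "is_diag m n G" "s \<in> sources m (fst G)"
  shows "snd G s \<in> targets n (fst G)"
  using assms unfolding is_diag_def by (blast intro: bij_betw_apply)

lemma und_edges_subset_nodes:
  assumes "is_diag m n G"
  shows "und_edges m G \<subseteq> (Inl ` bdry m n \<union> Inr ` fst G) \<times> (Inl ` bdry m n \<union> Inr ` fst G)"
proof (rule subrelI)
  fix a b assume "(a, b) \<in> und_edges m G"
  then obtain s where s: "s \<in> sources m (fst G)" and ab: "a = src_node s" "b = tgt_node (snd G s)"
    unfolding und_edges_def by blast
  have "snd G s \<in> targets n (fst G)" using assms s by (rule diag_wiring_in_targets)
  then show "(a, b) \<in> (Inl ` bdry m n \<union> Inr ` fst G) \<times> (Inl ` bdry m n \<union> Inr ` fst G)"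
    using s ab unfolding sources_def targets_def bdry_def src_node_def tgt_node_def by auto
qed

text \<open>The disjunct \<open>y = x\<close> covers indices outside \<open>bdry m n\<close>, which are isolated nodes.\<close>

lemma ancestry_of_path:
  assumes G: "is_diag m n G" and path: "(Inl x, Inl y) \<in> sym_rtrancl (und_edges m G)"
  shows "y = x \<or> (x, y) \<in> ancestry m n G"
proof (cases "Inl x \<in> Inl ` bdry m n \<union> Inr ` fst G")
  case True
  with sym_rtrancl_closed[OF und_edges_subset_nodes[OF G] path]
  have "x \<in> bdry m n" "y \<in> bdry m n" by auto
  with path show ?thesis unfolding ancestry_def by blast
next
  case False
  with sym_rtrancl_outside[OF und_edges_subset_nodes[OF G] path] show ?thesis by simp
qed

lemma src_node_map_src: "src_node (map_src f s) = map_sum id f (src_node s)"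
  by (cases s) (simp_all add: src_node_def)

lemma tgt_node_map_tgt: "tgt_node (map_tgt f t) = map_sum id f (tgt_node t)"
  by (cases t) (simp_all add: tgt_node_def)

lemma map_src_in_sources: "s \<in> sources m V \<Longrightarrow> f ` V \<subseteq> W \<Longrightarrow> map_src f s \<in> sources m W"
  unfolding sources_def by (cases s) auto

lemma ancestry_subset_of_wiring_map:
  assumes "\<phi> ` fst G \<subseteq> fst G'"
    and wiring: "\<forall>s \<in> sources m (fst G). snd G' (map_src \<phi> s) = map_tgt \<phi> (snd G s)"
  shows "ancestry m n G \<subseteq> ancestry m n G'"
proof -
  have edge: "(map_sum id \<phi> a, map_sum id \<phi> b) \<in> sym_rtrancl (und_edges m G')"
    if "(a, b) \<in> und_edges m G" for a b
  proof -
    from that obtain s where s: "s \<in> sources m (fst G)" "a = src_node s" "b = tgt_node (snd G s)"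
      unfolding und_edges_def by blast
    have "map_src \<phi> s \<in> sources m (fst G')" using s(1) assms(1) by (rule map_src_in_sources)
    then have "(src_node (map_src \<phi> s), tgt_node (snd G' (map_src \<phi> s))) \<in> und_edges m G'"
      by (rule und_edgesI)
    then have "(map_sum id \<phi> a, map_sum id \<phi> b) \<in> und_edges m G'"
      using wiring s by (simp add: src_node_map_src tgt_node_map_tgt)
    then show ?thesis by (intro r_into_rtrancl UnI1)
  qed
  show ?thesis
  proof (rule subrelI)
    fix x y assume "(x, y) \<in> ancestry m n G"
    then have "x \<in> bdry m n" "y \<in> bdry m n" "(Inl x, Inl y) \<in> sym_rtrancl (und_edges m G)"
      unfolding ancestry_def by simp_all
    moreover have "(map_sum id \<phi> (Inl x), map_sum id \<phi> (Inl y)) \<in> sym_rtrancl (und_edges m G')"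
      using edge calculation(3) by (rule sym_rtrancl_map)
    ultimately show "(x, y) \<in> ancestry m n G'" unfolding ancestry_def by simp
  qed
qed

lemma diag_iso_sym:
  assumes G: "is_diag m n G" and iso: "diag_iso m G G'"
  shows "diag_iso m G' G"
proof -
  obtain \<phi> where bij: "bij_betw \<phi> (fst G) (fst G')"
    and wiring: "\<forall>s \<in> sources m (fst G). snd G' (map_src \<phi> s) = map_tgt \<phi> (snd G s)"
    using iso unfolding diag_iso_def by blast
  define \<psi> where "\<psi> = inv_into (fst G) \<phi>"
  have bij': "bij_betw \<psi> (fst G') (fst G)"
    unfolding \<psi>_def by (rule bij_betw_inv_into[OF bij])
  have \<psi>\<phi>: "\<psi> (\<phi> v) = v" if "v \<in> fst G" for v
    unfolding \<psi>_def using bij that by (simp add: bij_betw_inv_into_left)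
  have \<phi>\<psi>: "\<phi> (\<psi> v) = v" if "v \<in> fst G'" for v
    unfolding \<psi>_def using bij that by (simp add: bij_betw_inv_into_right)
  have "snd G (map_src \<psi> s') = map_tgt \<psi> (snd G' s')" if s': "s' \<in> sources m (fst G')" for s'
  proof -
    let ?s = "map_src \<psi> s'"
    have s: "?s \<in> sources m (fst G)"
      using s' bij' by (intro map_src_in_sources) (auto simp: bij_betw_def)
    have "map_src \<phi> ?s = s'"
      using s' \<phi>\<psi> unfolding sources_def by (auto simp: src.map_comp)
    then have "map_tgt \<psi> (snd G' s') = map_tgt \<psi> (map_tgt \<phi> (snd G ?s))"
      using wiring s by metis
    also have "\<dots> = snd G ?s"
      using diag_wiring_in_targets[OF G s] \<psi>\<phi> unfolding targets_def by (auto simp: tgt.map_comp)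
    finally show ?thesis by simp
  qed
  with bij' show ?thesis unfolding diag_iso_def by blast
qed

lemma ancestry_subset_of_diag_iso:
  assumes "diag_iso m G G'"
  shows "ancestry m n G \<subseteq> ancestry m n G'"
proof -
  from assms obtain \<phi> where "bij_betw \<phi> (fst G) (fst G')"
    "\<forall>s \<in> sources m (fst G). snd G' (map_src \<phi> s) = map_tgt \<phi> (snd G s)"
    unfolding diag_iso_def by blast
  then show ?thesis by (metis ancestry_subset_of_wiring_map bij_betw_imp_surj_on order_refl)
qed

lemma ancestry_diag_iso:
  assumes "is_diag m n G" "diag_iso m G G'"
  shows "ancestry m n G = ancestry m n G'"
  using ancestry_subset_of_diag_iso[OF assms(2)] ancestry_subset_of_diag_iso[OF diag_iso_sym[OF assms]]
  by (rule subset_antisym)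

section \<open>Identities and symmetries\<close>

lemma ancestry_permutation_diag:
  assumes no_vertices: "fst G = {}" and wires: "\<And>i. i < N \<Longrightarrow> snd G (SIn i) = TOut (f i)"
    and inj: "inj_on f {..<N}" and range: "f ` {..<N} \<subseteq> {..<N}"
  shows "ancestry N N G = corel_of_perm N f"
proof -
  define P :: "(((nat + nat) + 'a) \<times> ((nat + nat) + 'a)) set"
    where "P = {(Inl (Inl i), Inl (Inr (f i))) | i. i < N}"
  have "und_edges N G = P"
    unfolding und_edges_eq_image sources_def P_def no_vertices
    by (force simp: wires src_node_def tgt_node_def)
  moreover have "trans ((P \<union> P\<inverse>)\<^sup>=)"
    using inj unfolding trans_def P_def inj_on_def by auto
  ultimately have "sym_rtrancl (und_edges N G) = (P \<union> P\<inverse>)\<^sup>="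
    by (simp add: sym_rtrancl_reflcl)
  then show ?thesis
    unfolding ancestry_def corel_of_perm_def Let_def P_def using range by (auto simp: bdry_def)
qed

lemma ancestry_id_diag: "ancestry m m (id_diag m) = corel_id m"
  unfolding corel_id_def by (rule ancestry_permutation_diag) (simp_all add: id_diag_def)

lemma ancestry_sym_diag: "ancestry (m + n) (n + m) (sym_diag m n) = corel_sym m n"
proof -
  have "ancestry (m + n) (m + n) (sym_diag m n) = corel_of_perm (m + n) (sym_perm m n)"
    by (rule ancestry_permutation_diag) (auto simp: sym_diag_def sym_perm_def inj_on_def)
  then show ?thesis unfolding corel_sym_def by (simp add: add.commute)
qed

section \<open>Tensor product\<close>

lemma bdry_add:
  "bdry (m + m') (n + n') = bdry m n \<union> map_sum ((+) m) ((+) n) ` bdry m' n'"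
proof -
  have "x \<in> bdry m n \<union> map_sum ((+) m) ((+) n) ` bdry m' n'" if "x \<in> bdry (m + m') (n + n')" for x
  proof (cases x)
    case (Inl i)
    then show ?thesis using that
      by (cases "i < m") (auto simp: bdry_def image_iff intro!: bexI[of _ "Inl (i - m)"])
  next
    case (Inr j)
    then show ?thesis using that
      by (cases "j < n") (auto simp: bdry_def image_iff intro!: bexI[of _ "Inr (j - n)"])
  qed
  then show ?thesis by (auto simp: bdry_def)
qed

lemma ancestry_refl: "x \<in> bdry m n \<Longrightarrow> (x, x) \<in> ancestry m n G"
  unfolding ancestry_def by simp

definition tensor_left :: "(nat + nat) + 'v \<Rightarrow> (nat + nat) + ('v + 'w)" where
  "tensor_left = map_sum id Inl"

definition tensor_right :: "nat \<Rightarrow> nat \<Rightarrow> (nat + nat) + 'w \<Rightarrow> (nat + nat) + ('v + 'w)" where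
  "tensor_right m n = map_sum (map_sum ((+) m) ((+) n)) Inr"

lemma tensor_left_simps [simp]:
  "tensor_left (Inl x) = Inl x" "tensor_left (Inr v) = Inr (Inl v)"
  by (simp_all add: tensor_left_def)

lemma tensor_right_simps [simp]:
  "tensor_right m n (Inl x) = Inl (map_sum ((+) m) ((+) n) x)" "tensor_right m n (Inr v) = Inr (Inr v)"
  by (simp_all add: tensor_right_def)

lemma inj_tensor_left: "inj tensor_left"
  unfolding tensor_left_def by (intro sum.inj_map) (simp_all add: inj_def)

lemma inj_tensor_right: "inj (tensor_right m n)"
  unfolding tensor_right_def by (intro sum.inj_map; simp add: inj_def)+

definition tensor_shift_src :: "nat \<Rightarrow> 'w src \<Rightarrow> ('v + 'w) src" where
  "tensor_shift_src m s = (case s of SIn i \<Rightarrow> SIn (m + i) | SOut u b \<Rightarrow> SOut (Inr u) b)"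

lemma sources_tensor_diag:
  fixes G :: "'v diag" and H :: "'w diag"
  shows "sources (m + m') (fst (tensor_diag m n G H))
    = map_src Inl ` sources m (fst G) \<union> tensor_shift_src m ` sources m' (fst H)"
proof
  show "map_src Inl ` sources m (fst G) \<union> tensor_shift_src m ` sources m' (fst H)
      \<subseteq> sources (m + m') (fst (tensor_diag m n G H))"
    by (auto simp: sources_def tensor_diag_def tensor_shift_src_def)
next
  show "sources (m + m') (fst (tensor_diag m n G H))
      \<subseteq> map_src Inl ` sources m (fst G) \<union> tensor_shift_src m ` sources m' (fst H)"
  proof
    fix s assume "s \<in> sources (m + m') (fst (tensor_diag m n G H))"
    then consider (left_input) i where "s = SIn i" "i < m"
      | (right_input) i where "s = SIn i" "m \<le> i" "i < m + m'"
      | (left_vertex) v b where "s = SOut (Inl v) b" "v \<in> fst G"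
      | (right_vertex) u b where "s = SOut (Inr u) b" "u \<in> fst H"
      unfolding sources_def tensor_diag_def by auto (metis leI)
    then show "s \<in> map_src Inl ` sources m (fst G) \<union> tensor_shift_src m ` sources m' (fst H)"
    proof cases
      case (right_input i)
      then have "s = tensor_shift_src m (SIn (i - m))" "i - m < m'"
        by (simp_all add: tensor_shift_src_def)
      then show ?thesis unfolding sources_def by blast
    next
      case (right_vertex u b)
      then have "s = tensor_shift_src m (SOut u b)" by (simp add: tensor_shift_src_def)
      then show ?thesis using right_vertex(2) unfolding sources_def by blast
    qed (force simp: sources_def)+
  qed
qed

lemma und_edges_tensor_diag:
  fixes G :: "'v diag" and H :: "'w diag"
  shows "und_edges (m + m') (tensor_diag m n G H)
    = map_prod tensor_left tensor_left ` und_edges m G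
      \<union> map_prod (tensor_right m n) (tensor_right m n) ` und_edges m' H"
proof -
  let ?T = "tensor_diag m n G H"
  have left: "(src_node (map_src Inl s) :: (nat + nat) + ('v + 'w), tgt_node (snd ?T (map_src Inl s)))
      = map_prod tensor_left tensor_left (src_node s, tgt_node (snd G s))"
    if "s \<in> sources m (fst G)" for s
    using that by (cases s; cases "snd G s")
      (auto simp: sources_def tensor_diag_def src_node_def tgt_node_def liftL_def)
  have right: "(src_node (tensor_shift_src m s) :: (nat + nat) + ('v + 'w),
      tgt_node (snd ?T (tensor_shift_src m s)))
      = map_prod (tensor_right m n) (tensor_right m n) (src_node s, tgt_node (snd H s))"
    if "s \<in> sources m' (fst H)" for s
    using that by (cases s; cases "snd H s")
      (auto simp: tensor_shift_src_def tensor_diag_def src_node_def tgt_node_def liftR_def)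
  show ?thesis
    unfolding und_edges_eq_image sources_tensor_diag image_Un image_image
    using left right by (simp cong: image_cong)
qed

lemma sym_rtrancl_und_edges_tensor_diag:
  fixes G :: "'v diag" and H :: "'w diag"
  assumes G: "is_diag m n G" and H: "is_diag m' n' H"
  shows "sym_rtrancl (und_edges (m + m') (tensor_diag m n G H))
    = sym_rtrancl (map_prod tensor_left tensor_left ` und_edges m G)
      \<union> sym_rtrancl (map_prod (tensor_right m n) (tensor_right m n) ` und_edges m' H)"
proof -
  let ?NG = "Inl ` bdry m n \<union> Inr ` fst G" and ?NH = "Inl ` bdry m' n' \<union> Inr ` fst H"
  have "map_prod tensor_left tensor_left ` und_edges m G \<subseteq> tensor_left ` ?NG \<times> tensor_left ` ?NG"
    using und_edges_subset_nodes[OF G] by blast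
  moreover have "map_prod (tensor_right m n) (tensor_right m n) ` und_edges m' H
      \<subseteq> tensor_right m n ` ?NH \<times> tensor_right m n ` ?NH"
    using und_edges_subset_nodes[OF H] by blast
  moreover have "(tensor_left ` ?NG :: ((nat + nat) + ('v + 'w)) set) \<inter> tensor_right m n ` ?NH = {}"
    by (auto simp: bdry_def)
  ultimately show ?thesis
    unfolding und_edges_tensor_diag by (rule sym_rtrancl_Un_disjoint)
qed

lemma tensor_path_left:
  fixes G :: "'v diag" and H :: "'w diag"
  assumes "(Inl x, Inl y) \<in> sym_rtrancl (und_edges m G)"
  shows "(Inl x, Inl y) \<in> sym_rtrancl (und_edges (m + m') (tensor_diag m n G H))"
proof -
  have "(tensor_left (Inl x), tensor_left (Inl y))
      \<in> sym_rtrancl (map_prod tensor_left tensor_left ` und_edges m G :: (((nat + nat) + ('v + 'w)) \<times> _) set)"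
    using assms by (simp only: sym_rtrancl_image_iff[OF inj_tensor_left])
  then have "(Inl x, Inl y)
      \<in> sym_rtrancl (map_prod tensor_left tensor_left ` und_edges m G :: (((nat + nat) + ('v + 'w)) \<times> _) set)"
    by simp
  then show ?thesis
    unfolding und_edges_tensor_diag by (rule sym_rtrancl_mono[OF Un_upper1])
qed

lemma tensor_path_right:
  fixes G :: "'v diag" and H :: "'w diag"
  assumes "(Inl x, Inl y) \<in> sym_rtrancl (und_edges m' H)"
  shows "(Inl (map_sum ((+) m) ((+) n) x), Inl (map_sum ((+) m) ((+) n) y))
    \<in> sym_rtrancl (und_edges (m + m') (tensor_diag m n G H))"
proof -
  have "(tensor_right m n (Inl x), tensor_right m n (Inl y)) \<in> sym_rtrancl
      (map_prod (tensor_right m n) (tensor_right m n) ` und_edges m' H :: (((nat + nat) + ('v + 'w)) \<times> _) set)"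
    using assms by (simp only: sym_rtrancl_image_iff[OF inj_tensor_right])
  then show ?thesis
    unfolding und_edges_tensor_diag by (simp add: sym_rtrancl_mono[OF Un_upper2])
qed

lemma tensor_path_cases:
  fixes G :: "'v diag" and H :: "'w diag"
  assumes G: "is_diag m n G" and H: "is_diag m' n' H"
    and path: "(Inl x, Inl y) \<in> sym_rtrancl (und_edges (m + m') (tensor_diag m n G H))"
  obtains "y = x" | "(x, y) \<in> ancestry m n G"
    | x0 y0 where "(x0, y0) \<in> ancestry m' n' H"
      "x = map_sum ((+) m) ((+) n) x0" "y = map_sum ((+) m) ((+) n) y0"
proof -
  from path consider
      "(tensor_left (Inl x), tensor_left (Inl y))
        \<in> sym_rtrancl (map_prod tensor_left tensor_left ` und_edges m G :: (((nat + nat) + ('v + 'w)) \<times> _) set)"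
    | "(Inl x, Inl y) \<in> sym_rtrancl (map_prod (tensor_right m n) (tensor_right m n) ` und_edges m' H
        :: (((nat + nat) + ('v + 'w)) \<times> _) set)"
    unfolding sym_rtrancl_und_edges_tensor_diag[OF G H] by auto
  then show thesis
  proof cases
    case 1
    then have "(Inl x, Inl y) \<in> sym_rtrancl (und_edges m G)"
      by (simp only: sym_rtrancl_image_iff[OF inj_tensor_left])
    then show thesis using ancestry_of_path[OF G] that by blast
  next
    case 2
    then have "y = x \<or> (\<exists>x0 y0. x = map_sum ((+) m) ((+) n) x0 \<and> y = map_sum ((+) m) ((+) n) y0
        \<and> (Inl x0, Inl y0) \<in> sym_rtrancl (und_edges m' H))"
      by (rule sym_rtrancl_image_Inl[OF inj_tensor_right, rotated 2]) auto
    then show thesis using ancestry_of_path[OF H] that by blast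
  qed
qed

lemma ancestry_tensor_diag:
  fixes G :: "'v diag" and H :: "'w diag"
  assumes G: "is_diag m n G" and H: "is_diag m' n' H"
  shows "ancestry (m + m') (n + n') (tensor_diag m n G H)
    = corel_tensor m n (ancestry m n G) (ancestry m' n' H)"
proof (intro equalityI subrelI)
  fix x y assume "(x, y) \<in> ancestry (m + m') (n + n') (tensor_diag m n G H)"
  then have x: "x \<in> bdry (m + m') (n + n')"
    and path: "(Inl x, Inl y) \<in> sym_rtrancl (und_edges (m + m') (tensor_diag m n G H))"
    unfolding ancestry_def by auto
  from G H path show "(x, y) \<in> corel_tensor m n (ancestry m n G) (ancestry m' n' H)"
  proof (cases rule: tensor_path_cases)
    case 1
    then show ?thesis using x unfolding bdry_add corel_tensor_def by (auto intro: ancestry_refl)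
  qed (auto simp: corel_tensor_def)
next
  fix x y assume "(x, y) \<in> corel_tensor m n (ancestry m n G) (ancestry m' n' H)"
  then consider "(x, y) \<in> ancestry m n G"
    | x0 y0 where "(x0, y0) \<in> ancestry m' n' H"
      "x = map_sum ((+) m) ((+) n) x0" "y = map_sum ((+) m) ((+) n) y0"
    unfolding corel_tensor_def by blast
  then show "(x, y) \<in> ancestry (m + m') (n + n') (tensor_diag m n G H)"
  proof cases
    case 1
    then show ?thesis unfolding ancestry_def bdry_add by (auto intro: tensor_path_left)
  next
    case 2
    then show ?thesis unfolding ancestry_def bdry_add by (auto intro: tensor_path_right)
  qed
qed

section \<open>Composition\<close>

definition glue_left :: "(nat + nat) + 'v \<Rightarrow> (nat + nat + nat) + ('v + 'w)" where
  "glue_left = map_sum emb1 Inl"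

definition glue_right :: "(nat + nat) + 'w \<Rightarrow> (nat + nat + nat) + ('v + 'w)" where
  "glue_right = map_sum emb2 Inr"

lemma glue_left_simps [simp]:
  "glue_left (Inl x) = Inl (emb1 x)" "glue_left (Inr v) = Inr (Inl v)"
  by (simp_all add: glue_left_def)

lemma glue_right_simps [simp]:
  "glue_right (Inl x) = Inl (emb2 x)" "glue_right (Inr v) = Inr (Inr v)"
  by (simp_all add: glue_right_def)

lemma inj_glue_left: "inj glue_left"
  unfolding glue_left_def by (intro sum.inj_map) (simp_all add: inj_def emb1_def split: sum.splits)

lemma inj_glue_right: "inj glue_right"
  unfolding glue_right_def by (intro sum.inj_map) (simp_all add: inj_def emb2_def split: sum.splits)

text \<open>The graphs |G| and |H| on the common node type \<open>(m + n + p) + (V + W)\<close>, glued along the n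
  middle pendants: this is |H \<circ> G| with every wire through the middle boundary subdivided.\<close>

definition glued_edges :: "nat \<Rightarrow> nat \<Rightarrow> 'v diag \<Rightarrow> 'w diag
    \<Rightarrow> (((nat + nat + nat) + ('v + 'w)) \<times> ((nat + nat + nat) + ('v + 'w))) set" where
  "glued_edges m n G H =
     map_prod glue_left glue_left ` und_edges m G \<union> map_prod glue_right glue_right ` und_edges n H"

text \<open>Undoes the subdivision: middle pendant j goes to the far end of the H-wire leaving input j.\<close>

definition contract_node :: "('w src \<Rightarrow> 'w tgt) \<Rightarrow> (nat + nat + nat) + ('v + 'w) \<Rightarrow> (nat + nat) + ('v + 'w)" where
  "contract_node wH x = (case x of
      Inl (Inl i) \<Rightarrow> Inl (Inl i)
    | Inl (Inr (Inl j)) \<Rightarrow> tgt_node (liftH (wH (SIn j)))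
    | Inl (Inr (Inr k)) \<Rightarrow> Inl (Inr k)
    | Inr v \<Rightarrow> Inr v)"

lemma glue_left_edge_in_glued:
  assumes "(a, b) \<in> und_edges m G"
  shows "(glue_left a, glue_left b) \<in> sym_rtrancl (glued_edges m n G H)"
proof -
  have "(glue_left a, glue_left b) \<in> glued_edges m n G H"
    using assms unfolding glued_edges_def by force
  then show ?thesis by (intro r_into_rtrancl UnI1)
qed

lemma glue_right_edge_in_glued:
  assumes "(a, b) \<in> und_edges n H"
  shows "(glue_right a, glue_right b) \<in> sym_rtrancl (glued_edges m n G H)"
proof -
  have "(glue_right a, glue_right b) \<in> glued_edges m n G H"
    using assms unfolding glued_edges_def by force
  then show ?thesis by (intro r_into_rtrancl UnI1)
qed

lemma sources_comp_diag_cases: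
  assumes "s \<in> sources m (fst (comp_diag G H))"
  obtains (left) s0 where "s0 \<in> sources m (fst G)" "s = map_src Inl s0"
    | (right) u b where "u \<in> fst H" "s = SOut (Inr u) b"
proof (cases s)
  case (SIn i)
  then show ?thesis using assms left[of "SIn i"] unfolding sources_def comp_diag_def by auto
next
  case (SOut x b)
  show ?thesis
  proof (cases x)
    case (Inl v)
    then show ?thesis using assms SOut left[of "SOut v b"] unfolding sources_def comp_diag_def by auto
  next
    case (Inr u)
    then show ?thesis using assms SOut right[of u b] unfolding sources_def comp_diag_def by auto
  qed
qed

lemma comp_edge_in_glued:
  fixes G :: "'v diag" and H :: "'w diag"
  assumes G: "is_diag m n G" and s: "s \<in> sources m (fst (comp_diag G H))"
  shows "(map_sum emb13 id (src_node s), map_sum emb13 id (tgt_node (snd (comp_diag G H) s)))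
    \<in> sym_rtrancl (glued_edges m n G H)"
  using s
proof (cases rule: sources_comp_diag_cases)
  case (left s0)
  have edge_G: "(glue_left (src_node s0), glue_left (tgt_node (snd G s0)))
      \<in> sym_rtrancl (glued_edges m n G H :: (((nat + nat + nat) + ('v + 'w)) \<times> _) set)"
    using left(1) by (intro glue_left_edge_in_glued und_edgesI)
  have src: "map_sum emb13 id (src_node s) = glue_left (src_node s0)"
    using left(2) by (cases s0) (simp_all add: src_node_def glue_left_def emb1_def emb13_def)
  show ?thesis
  proof (cases "snd G s0")
    case (TIn v)
    then show ?thesis using edge_G src left(2)
      by (cases s0) (simp_all add: comp_diag_def throughG_def tgt_node_def glue_left_def)
  next
    case (TOut j)
    \<comment> \<open>The wire through the shared boundary node j: one edge of G followed by one edge of H.\<close>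
    then have "j < n" using diag_wiring_in_targets[OF G left(1)] unfolding targets_def by auto
    then have edge_H: "(glue_right (src_node (SIn j)), glue_right (tgt_node (snd H (SIn j))))
        \<in> sym_rtrancl (glued_edges m n G H :: (((nat + nat + nat) + ('v + 'w)) \<times> _) set)"
      by (intro glue_right_edge_in_glued und_edgesI) (simp add: sources_def)
    have mid: "glue_left (tgt_node (snd G s0)) = glue_right (src_node (SIn j))"
      using TOut by (simp add: glue_left_def glue_right_def tgt_node_def src_node_def emb1_def emb2_def)
    have "(glue_left (src_node s0), glue_right (tgt_node (snd H (SIn j))))
        \<in> sym_rtrancl (glued_edges m n G H)"
      using edge_G edge_H unfolding mid by (rule rtrancl_trans)
    moreover have "map_sum emb13 id (tgt_node (snd (comp_diag G H) s))
        = glue_right (tgt_node (snd H (SIn j)))"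
      using left(2) TOut
      by (cases s0; cases "snd H (SIn j)")
        (simp_all add: comp_diag_def throughG_def liftH_def tgt_node_def glue_right_def emb2_def emb13_def)
    ultimately show ?thesis using src by simp
  qed
next
  case (right u b)
  then have "(glue_right (src_node (SOut u b)), glue_right (tgt_node (snd H (SOut u b))))
      \<in> sym_rtrancl (glued_edges m n G H :: (((nat + nat + nat) + ('v + 'w)) \<times> _) set)"
    by (intro glue_right_edge_in_glued und_edgesI) (simp add: sources_def)
  moreover have "map_sum emb13 id (tgt_node (snd (comp_diag G H) s))
      = glue_right (tgt_node (snd H (SOut u b)))"
    using right(2) by (cases "snd H (SOut u b)")
      (simp_all add: comp_diag_def liftH_def tgt_node_def glue_right_def emb2_def emb13_def)
  ultimately show ?thesis using right(2) by (simp add: src_node_def glue_right_def)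
qed

lemma glued_edge_in_comp:
  fixes G :: "'v diag" and H :: "'w diag"
  assumes "(a, b) \<in> glued_edges m n G H"
  shows "(contract_node (snd H) a, contract_node (snd H) b) \<in> sym_rtrancl (und_edges m (comp_diag G H))"
  using assms unfolding glued_edges_def
proof
  assume "(a, b) \<in> map_prod glue_left glue_left ` und_edges m G"
  then obtain s0 where s0: "s0 \<in> sources m (fst G)"
    and ab: "a = glue_left (src_node s0)" "b = glue_left (tgt_node (snd G s0))"
    unfolding und_edges_def by auto
  have "map_src Inl s0 \<in> sources m (fst (comp_diag G H))"
    using s0 by (intro map_src_in_sources) (auto simp: comp_diag_def)
  then have "(src_node (map_src Inl s0), tgt_node (snd (comp_diag G H) (map_src Inl s0)))
      \<in> und_edges m (comp_diag G H)"
    by (rule und_edgesI)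
  moreover have "contract_node (snd H) a = src_node (map_src Inl s0)"
    using ab by (cases s0) (simp_all add: src_node_def contract_node_def glue_left_def emb1_def)
  moreover have "contract_node (snd H) b = tgt_node (snd (comp_diag G H) (map_src Inl s0))"
    using ab by (cases s0; cases "snd G s0")
      (simp_all add: tgt_node_def contract_node_def glue_left_def emb1_def comp_diag_def throughG_def)
  ultimately show ?thesis by (intro r_into_rtrancl) simp
next
  assume "(a, b) \<in> map_prod glue_right glue_right ` und_edges n H"
  then obtain s0 where s0: "s0 \<in> sources n (fst H)"
    and ab: "a = glue_right (src_node s0)" "b = glue_right (tgt_node (snd H s0))"
    unfolding und_edges_def by auto
  have b: "contract_node (snd H) b = (tgt_node (liftH (snd H s0)) :: (nat + nat) + ('v + 'w))"
    using ab by (cases "snd H s0") (simp_all add: tgt_node_def contract_node_def glue_right_def emb2_def liftH_def)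
  show ?thesis
  proof (cases s0)
    case (SIn j)
    \<comment> \<open>Edges of H leaving the shared boundary are contracted to a point.\<close>
    then have "contract_node (snd H) a = contract_node (snd H) b"
      using ab b by (simp add: src_node_def contract_node_def glue_right_def emb2_def)
    then show ?thesis by simp
  next
    case (SOut u c)
    then have "SOut (Inr u) c \<in> sources m (fst (comp_diag G H))"
      using s0 unfolding sources_def comp_diag_def by auto
    then have "(src_node (SOut (Inr u) c), tgt_node (snd (comp_diag G H) (SOut (Inr u) c)))
        \<in> und_edges m (comp_diag G H)"
      by (rule und_edgesI)
    then show ?thesis using ab b SOut
      by (intro r_into_rtrancl) (simp add: src_node_def contract_node_def glue_right_def comp_diag_def)
  qed
qed

lemma comp_path_iff_glued_path:
  fixes G :: "'v diag" and H :: "'w diag"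
  assumes G: "is_diag m n G"
  shows "(Inl x, Inl y) \<in> sym_rtrancl (und_edges m (comp_diag G H))
    \<longleftrightarrow> (Inl (emb13 x), Inl (emb13 y)) \<in> sym_rtrancl (glued_edges m n G H)"
proof
  assume "(Inl x, Inl y) \<in> sym_rtrancl (und_edges m (comp_diag G H))"
  then have "(map_sum emb13 id (Inl x), map_sum emb13 id (Inl y)) \<in> sym_rtrancl (glued_edges m n G H)"
  proof (rule sym_rtrancl_map[rotated])
    fix a b assume "(a, b) \<in> und_edges m (comp_diag G H)"
    then obtain s where "s \<in> sources m (fst (comp_diag G H))"
      "a = src_node s" "b = tgt_node (snd (comp_diag G H) s)"
      unfolding und_edges_def by blast
    then show "(map_sum emb13 id a, map_sum emb13 id b) \<in> sym_rtrancl (glued_edges m n G H)"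
      using comp_edge_in_glued[OF G] by simp
  qed
  then show "(Inl (emb13 x), Inl (emb13 y)) \<in> sym_rtrancl (glued_edges m n G H)" by simp
next
  assume "(Inl (emb13 x), Inl (emb13 y)) \<in> sym_rtrancl (glued_edges m n G H)"
  then have "(contract_node (snd H) (Inl (emb13 x)), contract_node (snd H) (Inl (emb13 y)))
      \<in> sym_rtrancl (und_edges m (comp_diag G H))"
    by (rule sym_rtrancl_map[rotated]) (rule glued_edge_in_comp)
  moreover have "(contract_node (snd H) (Inl (emb13 z)) :: (nat + nat) + ('v + 'w)) = Inl z" for z
    by (cases z) (simp_all add: contract_node_def emb13_def)
  ultimately show "(Inl x, Inl y) \<in> sym_rtrancl (und_edges m (comp_diag G H))" by simp
qed

lemma glued_piece_in_corel:
  fixes G :: "'v diag" and H :: "'w diag"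
  assumes G: "is_diag m n G" and H: "is_diag n p H"
    and piece: "(Inl a, Inl b) \<in> sym_rtrancl (map_prod glue_left glue_left ` und_edges m G
        :: (((nat + nat + nat) + ('v + 'w)) \<times> _) set)
      \<or> (Inl a, Inl b) \<in> sym_rtrancl (map_prod glue_right glue_right ` und_edges n H
        :: (((nat + nat + nat) + ('v + 'w)) \<times> _) set)"
  shows "b = a \<or> (a, b) \<in> map_prod emb1 emb1 ` ancestry m n G \<union> map_prod emb2 emb2 ` ancestry n p H"
  using piece
proof
  assume "(Inl a, Inl b) \<in> sym_rtrancl (map_prod glue_left glue_left ` und_edges m G
    :: (((nat + nat + nat) + ('v + 'w)) \<times> _) set)"
  then have "b = a \<or> (\<exists>x y. a = emb1 x \<and> b = emb1 y \<and> (Inl x, Inl y) \<in> sym_rtrancl (und_edges m G))"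
    by (rule sym_rtrancl_image_Inl[OF inj_glue_left, rotated 2]) auto
  then show ?thesis using ancestry_of_path[OF G] by blast
next
  assume "(Inl a, Inl b) \<in> sym_rtrancl (map_prod glue_right glue_right ` und_edges n H
    :: (((nat + nat + nat) + ('v + 'w)) \<times> _) set)"
  then have "b = a \<or> (\<exists>x y. a = emb2 x \<and> b = emb2 y \<and> (Inl x, Inl y) \<in> sym_rtrancl (und_edges n H))"
    by (rule sym_rtrancl_image_Inl[OF inj_glue_right, rotated 2]) auto
  then show ?thesis using ancestry_of_path[OF H] by blast
qed

lemma glued_path_imp_corel_path:
  fixes G :: "'v diag" and H :: "'w diag"
  assumes G: "is_diag m n G" and H: "is_diag n p H"
    and path: "(Inl a, Inl b) \<in> sym_rtrancl (glued_edges m n G H)"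
  defines "E \<equiv> map_prod emb1 emb1 ` ancestry m n G \<union> map_prod emb2 emb2 ` ancestry n p H"
  shows "(a, b) \<in> sym_rtrancl E"
proof -
  let ?EL = "map_prod glue_left glue_left ` und_edges m G :: (((nat + nat + nat) + ('v + 'w)) \<times> _) set"
  let ?ER = "map_prod glue_right glue_right ` und_edges n H :: (((nat + nat + nat) + ('v + 'w)) \<times> _) set"
  let ?A = "range Inl \<union> Inr ` range Inl :: ((nat + nat + nat) + ('v + 'w)) set"
  let ?B = "range Inl \<union> Inr ` range Inr :: ((nat + nat + nat) + ('v + 'w)) set"
  have "glue_left z \<in> ?A" "glue_right z' \<in> ?B" for z z'
    by (cases z; cases z'; simp add: glue_left_def glue_right_def)+
  then have "?EL \<subseteq> ?A \<times> ?A" "?ER \<subseteq> ?B \<times> ?B" by auto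
  moreover have "?A \<inter> ?B = range Inl" by auto
  ultimately have interface_path: "(Inl a, Inl b) \<in> (Restr (sym_rtrancl ?EL \<union> sym_rtrancl ?ER) (range Inl))\<^sup>*"
    using sym_rtrancl_Un_interface[of ?EL ?A ?ER ?B "Inl a" "Inl b"] path
    unfolding glued_edges_def by simp
  have pieces: "Restr (sym_rtrancl ?EL \<union> sym_rtrancl ?ER) (range Inl)
      \<subseteq> sym_rtrancl (map_prod Inl Inl ` E)"
  proof (rule subrelI)
    fix c d assume cd: "(c, d) \<in> Restr (sym_rtrancl ?EL \<union> sym_rtrancl ?ER) (range Inl)"
    then obtain c' d' where c'd': "c = Inl c'" "d = Inl d'" by blast
    with cd have "(Inl c', Inl d') \<in> sym_rtrancl ?EL \<or> (Inl c', Inl d') \<in> sym_rtrancl ?ER" by blast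
    then have "d' = c' \<or> (c', d') \<in> E" unfolding E_def by (rule glued_piece_in_corel[OF G H])
    then show "(c, d) \<in> sym_rtrancl (map_prod Inl Inl ` E)"
    proof
      assume "(c', d') \<in> E"
      then show ?thesis using c'd' by (intro r_into_rtrancl UnI1) blast
    qed (simp add: c'd')
  qed
  have "(Inl a :: (nat + nat + nat) + ('v + 'w), Inl b) \<in> (sym_rtrancl (map_prod Inl Inl ` E))\<^sup>*"
    using rtrancl_mono[OF pieces] interface_path by (rule subsetD)
  then have "(Inl a :: (nat + nat + nat) + ('v + 'w), Inl b) \<in> sym_rtrancl (map_prod Inl Inl ` E)"
    by simp
  then show ?thesis by (simp add: sym_rtrancl_image_iff inj_Inl)
qed

lemma corel_path_imp_glued_path:
  assumes "(a, b) \<in> sym_rtrancl (map_prod emb1 emb1 ` ancestry m n G \<union> map_prod emb2 emb2 ` ancestry n p H)"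
  shows "(Inl a, Inl b) \<in> sym_rtrancl (glued_edges m n G H)"
  using assms
proof (rule sym_rtrancl_map[rotated])
  fix c d assume "(c, d) \<in> map_prod emb1 emb1 ` ancestry m n G \<union> map_prod emb2 emb2 ` ancestry n p H"
  then consider (left) x y where "(Inl x, Inl y) \<in> sym_rtrancl (und_edges m G)" "c = emb1 x" "d = emb1 y"
    | (right) x y where "(Inl x, Inl y) \<in> sym_rtrancl (und_edges n H)" "c = emb2 x" "d = emb2 y"
    unfolding ancestry_def by blast
  then show "(Inl c, Inl d) \<in> sym_rtrancl (glued_edges m n G H)"
  proof cases
    case left
    then have "(glue_left (Inl x), glue_left (Inl y)) \<in> sym_rtrancl (glued_edges m n G H)"
      by (intro sym_rtrancl_map[OF glue_left_edge_in_glued])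
    then show ?thesis using left by simp
  next
    case right
    then have "(glue_right (Inl x), glue_right (Inl y)) \<in> sym_rtrancl (glued_edges m n G H)"
      by (intro sym_rtrancl_map[OF glue_right_edge_in_glued])
    then show ?thesis using right by simp
  qed
qed

lemma ancestry_comp_diag:
  assumes G: "is_diag m n G" and H: "is_diag n p H"
  shows "ancestry m p (comp_diag G H) = corel_comp m p (ancestry m n G) (ancestry n p H)"
proof -
  have "(Inl a, Inl b) \<in> sym_rtrancl (glued_edges m n G H)
      \<longleftrightarrow> (a, b) \<in> sym_rtrancl (map_prod emb1 emb1 ` ancestry m n G \<union> map_prod emb2 emb2 ` ancestry n p H)"
    for a b
    using glued_path_imp_corel_path[OF G H] corel_path_imp_glued_path by blast
  then show ?thesis
    unfolding ancestry_def[of m p] corel_comp_def Let_def comp_path_iff_glued_path[OF G] by simp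
qed

theorem theorem2p7:
  shows
  \<comment> \<open>Pi sends a morphism m -> n to a corelation m -> n (identity on objects)\<close>
  "(\<forall>m n (G :: 'v diag). is_diag m n G \<longrightarrow> is_corel m n (ancestry m n G))
   \<comment> \<open>well defined on isomorphism classes\<close>
   \<and> (\<forall>m n (G :: 'v diag) (G' :: 'w diag). is_diag m n G \<and> is_diag m n G' \<and> diag_iso m G G'
        \<longrightarrow> ancestry m n G = ancestry m n G')
   \<comment> \<open>preserves identities\<close>
   \<and> (\<forall>m. ancestry m m (id_diag m :: 'v diag) = corel_id m)
   \<comment> \<open>preserves composition\<close>
   \<and> (\<forall>m n p (G :: 'v diag) (H :: 'w diag). is_diag m n G \<and> is_diag n p H
        \<longrightarrow> ancestry m p (comp_diag G H) = corel_comp m p (ancestry m n G) (ancestry n p H))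
   \<comment> \<open>strict monoidal: preserves tensor\<close>
   \<and> (\<forall>m n m' n' (G :: 'v diag) (H :: 'w diag). is_diag m n G \<and> is_diag m' n' H
        \<longrightarrow> ancestry (m + m') (n + n') (tensor_diag m n G H)
            = corel_tensor m n (ancestry m n G) (ancestry m' n' H))
   \<comment> \<open>symmetric: preserves symmetries\<close>
   \<and> (\<forall>m n. ancestry (m + n) (n + m) (sym_diag m n :: 'v diag) = corel_sym m n)"
  by (intro conjI allI impI; (elim conjE)?;
      rule ancestry_is_corel ancestry_diag_iso ancestry_id_diag ancestry_comp_diag
        ancestry_tensor_diag ancestry_sym_diag; assumption)

end
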